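(* Let $2\le k\le n$ be integers, $V=[n]$, and $\mathbf{d}\in\mathbb{Z}^n$. (a) For $a,b\in V$, if $\mathbf{d}-\mathbf{e}_a$ and $\mathbf{d}-\mathbf{e}_b$ are $k$-graphical, then $$R_{ab}(\mathbf{d})=\frac{d_a}{d_b}\cdot\frac{1-B(a,b,\mathbf{d}-\mathbf{e}_b)}{1-B(b,a,\mathbf{d}-\mathbf{e}_a)},$$ provided that $B(b,a,\mathbf{d}-\mathbf{e}_a)<1$, where for $i,j\in\{a,b\}$ and a sequence $\mathbf{d}'$, $$B(i,j,\mathbf{d}')=\frac{1}{d_i}\left(\sum_{K\in\binom{V\setminus\{a,b\}}{k-2}}P_{K\cup\{i,j\}}(\mathbf{d}')+\sum_{K\in\binom{V\setminus\{a,b\}}{k-1}}Y_{i,K,j}(\mathbf{d}')\right).$$ (b) Let $A\in\binom{V}{k-1}$ and $v\in V\setminus A$. Then $$P_{A\cup\{v\}}(\mathbf{d})=d_v\left(\sum_{B\in\binom{V\setminus\{v\}}{k-1}}R_{B,A}(\mathbf{d}-\mathbf{e}_v)\,\frac{1-P_{B\cup\{v\}}(\mathbf{d}-\mathbf{e}_{B\cup\{v\}})}{1-P_{A\cup\{v\}}(\mathbf{d}-\mathbf{e}_{A\cup\{v\}})}\right)^{-1},$$ provided that $P_{A\cup\{v\}}(\mathbf{d})>0$ and, for every $B\in\binom{V\setminus\{v\}}{k-1}$ with $A$-consistent ordering $(a_1,\dots,a_{k-1})$, $(b_1,\dots,b_{k-1})$ of $(A,B)$, the sequences $\mathbf{d}-\mathbf{e}_v-\mathbf{e}_{\{b_1,\dots,b_j,a_{j+1},\dots,a_{k-1}\}}$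 are $k$-graphical for all $j\in\{0,1,\dots,k-1\}$. (c) For $K\in\binom{V}{k-1}$ and distinct $a,b\in V\setminus K$, if $P_{K\cup\{a\}}(\mathbf{d}-\mathbf{e}_{K\cup\{a\}})<1$, then $$Y_{a,K,b}(\mathbf{d})=\frac{P_{K\cup\{a\}}(\mathbf{d})}{1-P_{K\cup\{a\}}(\mathbf{d}-\mathbf{e}_{K\cup\{a\}})}\left(P_{K\cup\{b\}}(\mathbf{d}-\mathbf{e}_{K\cup\{a\}})-Y_{a,K,b}(\mathbf{d}-\mathbf{e}_{K\cup\{a\}})\right).$$
   Context: A $k$-graph on $V=[n]$ is a set of $k$-element subsets of $V$. $\mathcal{N}(\mathbf{d})$ is the number of $k$-graphs on $V$ with degree sequence $\mathbf{d}$; $\mathbf{d}$ is $k$-graphical if $\mathcal{N}(\mathbf{d})>0$. $\mathbf{e}_a$ is the $a$-th standard basis vector and $\mathbf{e}_S=\sum_{a\in S}\mathbf{e}_a$ for $S\subseteq V$. For $a,b\in V$ with $\mathcal{N}(\mathbf{d}-\mathbf{e}_b)>0$, $R_{ab}(\mathbf{d})=\mathcal{N}(\mathbf{d}-\mathbf{e}_a)/\mathcal{N}(\mathbf{d}-\mathbf{e}_b)$. For $k$-graphical $\mathbf{d}$ and $S\subseteq V$, $P_S(\mathbf{d})$ is the probability that a uniformly random $k$-graph with degree sequence $\mathbf{d}$ contains $S$ as an edge (so $P_S=0$ if $|S|\ne k$); for $K\in\binom V{k-1}$, $a,b\in V\setminus K$, $Y_{a,K,b}(\mathbf{d})$ is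 the probability that it contains both $K\cup\{a\}$ and $K\cup\{b\}$ when $a\neq b$, and $Y_{a,K,a}(\mathbf{d})=0$. Identities are asserted whenever all quantities in them are defined. For $A,B\in\binom V{k-1}$, the $A$-consistent ordering of $(A,B)$ is the ordering $(a_1,\dots,a_{k-1})$ of $A$ and $(b_1,\dots,b_{k-1})$ of $B$ such that $a_1<\dots<a_{k-1}$, $b_i=a_i$ whenever $b_i\in A$, and the elements $b_i\notin A$ appear in increasing order of $i$. Then $R_{B,A}(\mathbf{d})=\prod_{j=1}^{k-1}R_{b_ja_j}\big(\mathbf{d}-\mathbf{e}_{\{b_1,\dots,b_{j-1},a_{j+1},\dots,a_{k-1}\}}\big)$. *)

theory Defs
  imports Complex_Main
begin

definition verts :: "nat \<Rightarrow> nat set" where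
  "verts n = {1..n}"

definition ksub :: "'a set \<Rightarrow> nat \<Rightarrow> 'a set set" where
  "ksub S m = {K. K \<subseteq> S \<and> card K = m}"

definition deg :: "nat set set \<Rightarrow> nat \<Rightarrow> int" where
  "deg G v = int (card {e \<in> G. v \<in> e})"

text \<open>k-graphs on [n] with degree sequence d (d only matters on [n]).\<close>
definition kgraphs_deg :: "nat \<Rightarrow> nat \<Rightarrow> (nat \<Rightarrow> int) \<Rightarrow> nat set set set" where
  "kgraphs_deg n k d = {G. G \<subseteq> ksub (verts n) k \<and> (\<forall>v \<in> verts n. deg G v = d v)}"

definition Ncount :: "nat \<Rightarrow> nat \<Rightarrow> (nat \<Rightarrow> int) \<Rightarrow> nat" where
  "Ncount n k d = card (kgraphs_deg n k d)"

definition kgraphical :: "nat \<Rightarrow> nat \<Rightarrow> (nat \<Rightarrow> int) \<Rightarrow> bool" where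
  "kgraphical n k d \<longleftrightarrow> Ncount n k d > 0"

text \<open>Indicator vector e_S; e_a is ev {a}.\<close>
definition ev :: "nat set \<Rightarrow> nat \<Rightarrow> int" where
  "ev S = (\<lambda>x. if x \<in> S then 1 else 0)"

definition Rab :: "nat \<Rightarrow> nat \<Rightarrow> nat \<Rightarrow> nat \<Rightarrow> (nat \<Rightarrow> int) \<Rightarrow> real" where
  "Rab n k a b d = real (Ncount n k (d - ev {a})) / real (Ncount n k (d - ev {b}))"

definition Pe :: "nat \<Rightarrow> nat \<Rightarrow> nat set \<Rightarrow> (nat \<Rightarrow> int) \<Rightarrow> real" where
  "Pe n k S d = real (card {G \<in> kgraphs_deg n k d. S \<in> G}) / real (Ncount n k d)"

definition Y :: "nat \<Rightarrow> nat \<Rightarrow> nat \<Rightarrow> nat set \<Rightarrow> nat \<Rightarrow> (nat \<Rightarrow> int) \<Rightarrow> real" where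
  "Y n k a K b d = (if a = b then 0 else
     real (card {G \<in> kgraphs_deg n k d. K \<union> {a} \<in> G \<and> K \<union> {b} \<in> G}) / real (Ncount n k d))"

text \<open>A-consistent ordering: as = A sorted; bs puts a_i where a_i \<in> B,
  and fills the remaining positions with B - A in increasing order.\<close>
fun fillB :: "nat set \<Rightarrow> nat list \<Rightarrow> nat list \<Rightarrow> nat list" where
  "fillB B [] ys = []"
| "fillB B (x # xs) ys = (if x \<in> B then x # fillB B xs ys else hd ys # fillB B xs (tl ys))"

definition cons_ord_A :: "nat set \<Rightarrow> nat list" where
  "cons_ord_A A = sorted_list_of_set A"

definition cons_ord_B :: "nat set \<Rightarrow> nat set \<Rightarrow> nat list" where
  "cons_ord_B A B = fillB B (sorted_list_of_set A) (sorted_list_of_set (B - A))"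

text \<open>R_{B,A}(d) via the product over the A-consistent ordering (0-indexed lists).\<close>
definition RBA :: "nat \<Rightarrow> nat \<Rightarrow> nat set \<Rightarrow> nat set \<Rightarrow> (nat \<Rightarrow> int) \<Rightarrow> real" where
  "RBA n k B A d = (let as = cons_ord_A A; bs = cons_ord_B A B in
     (\<Prod>j < k - 1. Rab n k (bs ! j) (as ! j)
        (d - ev (set (take j bs) \<union> set (drop (Suc j) as)))))"

text \<open>The quantity B(i,j,d') of part (a), for the fixed pair a,b and fixed d.\<close>
definition Bq :: "nat \<Rightarrow> nat \<Rightarrow> (nat \<Rightarrow> int) \<Rightarrow> nat \<Rightarrow> nat \<Rightarrow> nat \<Rightarrow> nat \<Rightarrow> (nat \<Rightarrow> int) \<Rightarrow> real" where
  "Bq n k d a b i j d' = (1 / real_of_int (d i)) *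
     ((\<Sum>K \<in> ksub (verts n - {a, b}) (k - 2). Pe n k (K \<union> {i, j}) d')
      + (\<Sum>K \<in> ksub (verts n - {a, b}) (k - 1). Y n k i K j d'))"

end

theory Submission
  imports Defs
begin

text \<open>
  Part (c): deleting the edge S = K + a is a bijection from the k-graphs of degree d containing S
  onto those of degree d - e_S not containing S; counting the latter that contain K + b gives the
  recursion for Y.

  Part (b): by the same bijection, N(d) P_S(d) = N(d - e_S) (1 - P_S(d - e_S)), and the product
  defining R_{B,A}(d - e_v) telescopes to N(d - e_{B+v}) / N(d - e_{A+v}). Hence the summand for B
  is the number of graphs containing B + v divided by the number containing A + v, and the
  numerators add up to N(d) d_v because every graph is counted once for each edge at v.

  Part (a): a switching is a pair (G, e) with G of degree d - e_b and e an edge of G through a but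
  not b whose switch e - a + b is not an edge of G. Replacing e by its switch is a bijection onto
  the switchings from b to a for degree d - e_a. In a fixed G the switchable edges are the d_a edges
  at a, minus those through b, minus those whose switch is already present; averaging over G gives
  N(d - e_b) d_a (1 - B(a, b, d - e_b)).
\<close>

lemma card_filter_split:
  "finite X \<Longrightarrow> card {x \<in> X. Q x} = card {x \<in> X. Q x \<and> P x} + card {x \<in> X. Q x \<and> \<not> P x}"
  by (subst card_Un_disjoint[symmetric]) (auto intro: arg_cong[where f = card])

lemma sum_card_filter_swap:
  assumes "finite X" "finite T"
  shows "(\<Sum>x\<in>X. card {y \<in> T. R x y}) = (\<Sum>y\<in>T. card {x \<in> X. R x y})"
proof -
  have "(\<Sum>x\<in>X. card {y \<in> T. R x y}) = (\<Sum>x\<in>X. \<Sum>y\<in>T. if R x y then 1 else 0)"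
    using sum.inter_filter[OF assms(2), of "\<lambda>_. 1 :: nat"] by simp
  also have "\<dots> = (\<Sum>y\<in>T. \<Sum>x\<in>X. if R x y then 1 else 0)"
    by (rule sum.swap)
  also have "\<dots> = (\<Sum>y\<in>T. card {x \<in> X. R x y})"
    using sum.inter_filter[OF assms(1), of "\<lambda>_. 1 :: nat"] by simp
  finally show ?thesis .
qed

lemma inj_on_Un_disjoint: "inj_on (\<lambda>X. X \<union> C) {X. X \<inter> C = {}}"
  by (auto simp: inj_on_def)

lemma mem_ksub_iff: "K \<in> ksub S m \<longleftrightarrow> K \<subseteq> S \<and> card K = m"
  unfolding ksub_def by simp

lemma finite_ksub: "finite S \<Longrightarrow> finite (ksub S m)"
  unfolding ksub_def by (rule finite_subset[of _ "Pow S"]) auto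

lemma finite_verts [simp]: "finite (verts n)"
  unfolding verts_def by simp

lemma Un_singleton_mem_ksub:
  "K \<in> ksub S (k - 1) \<Longrightarrow> a \<in> S - K \<Longrightarrow> 1 \<le> k \<Longrightarrow> finite S \<Longrightarrow> K \<union> {a} \<in> ksub S k"
  unfolding ksub_def by (auto dest: finite_subset)

lemma finite_kgraphs_deg: "finite (kgraphs_deg n k d)"
  unfolding kgraphs_deg_def
  by (rule finite_subset[of _ "Pow (ksub (verts n) k)"]) (auto simp: finite_ksub)

lemma kgraphs_deg_subset: "G \<in> kgraphs_deg n k d \<Longrightarrow> G \<subseteq> ksub (verts n) k"
  unfolding kgraphs_deg_def by auto

lemma finite_kgraph: "G \<in> kgraphs_deg n k d \<Longrightarrow> finite G"
  unfolding kgraphs_deg_def using finite_subset finite_ksub[OF finite_verts] by blast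

lemma card_incident_edges:
  "G \<in> kgraphs_deg n k d \<Longrightarrow> v \<in> verts n \<Longrightarrow> int (card {e \<in> G. v \<in> e}) = d v"
  unfolding kgraphs_deg_def deg_def by auto

lemma deg_insert:
  assumes "finite H" "S \<notin> H"
  shows "deg (insert S H) v = deg H v + ev S v"
proof -
  have "{e \<in> insert S H. v \<in> e} = (if v \<in> S then insert S {e \<in> H. v \<in> e} else {e \<in> H. v \<in> e})"
    by auto
  then show ?thesis
    using assms unfolding deg_def ev_def by simp
qed

section \<open>Adding and removing an edge\<close>

lemma insert_mem_kgraphs_deg_iff:
  assumes "S \<in> ksub (verts n) k" "S \<notin> H"
  shows "insert S H \<in> kgraphs_deg n k d \<longleftrightarrow> H \<in> kgraphs_deg n k (d - ev S)"
proof (cases "H \<subseteq> ksub (verts n) k")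
  case True
  then have "finite H"
    using finite_subset finite_ksub[OF finite_verts] by blast
  then show ?thesis
    using True assms unfolding kgraphs_deg_def by (auto simp: deg_insert algebra_simps)
qed (auto simp: kgraphs_deg_def)

lemma card_with_edge_eq_card_without_edge:
  assumes "S \<in> ksub (verts n) k"
  shows "card {G \<in> kgraphs_deg n k d. S \<in> G \<and> Q G}
       = card {H \<in> kgraphs_deg n k (d - ev S). S \<notin> H \<and> Q (insert S H)}"
proof -
  have "{G \<in> kgraphs_deg n k d. S \<in> G \<and> Q G}
      = (\<lambda>H. H \<union> {S}) ` {H \<in> kgraphs_deg n k (d - ev S). S \<notin> H \<and> Q (insert S H)}"
  proof (intro equalityI subsetI)
    fix G assume G: "G \<in> {G \<in> kgraphs_deg n k d. S \<in> G \<and> Q G}"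
    then have "G = insert S (G - {S})" by auto
    then show "G \<in> (\<lambda>H. H \<union> {S}) ` {H \<in> kgraphs_deg n k (d - ev S). S \<notin> H \<and> Q (insert S H)}"
      using G insert_mem_kgraphs_deg_iff[OF assms, of "G - {S}"] by (intro image_eqI[of _ _ "G - {S}"]) auto
  qed (use insert_mem_kgraphs_deg_iff[OF assms] in auto)
  moreover have "inj_on (\<lambda>H. H \<union> {S}) {H \<in> kgraphs_deg n k (d - ev S). S \<notin> H \<and> Q (insert S H)}"
    by (rule inj_on_subset[OF inj_on_Un_disjoint]) auto
  ultimately show ?thesis
    by (simp add: card_image)
qed

lemma card_with_edge_eq_Pe:
  "real (card {G \<in> kgraphs_deg n k d. S \<in> G}) = Pe n k S d * real (Ncount n k d)"
  by (cases "Ncount n k d = 0") (auto simp: Pe_def Ncount_def finite_kgraphs_deg)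

lemma card_with_edges_eq_Y:
  "a \<noteq> b \<Longrightarrow> real (card {G \<in> kgraphs_deg n k d. K \<union> {a} \<in> G \<and> K \<union> {b} \<in> G})
    = Y n k a K b d * real (Ncount n k d)"
  by (cases "Ncount n k d = 0") (auto simp: Y_def Ncount_def finite_kgraphs_deg)

lemma card_with_edge_eq_Ncount_diff:
  assumes "S \<in> ksub (verts n) k"
  shows "real (card {G \<in> kgraphs_deg n k d. S \<in> G})
       = real (Ncount n k (d - ev S)) * (1 - Pe n k S (d - ev S))"
proof -
  have "card {G \<in> kgraphs_deg n k d. S \<in> G} = card {H \<in> kgraphs_deg n k (d - ev S). S \<notin> H}"
    using card_with_edge_eq_card_without_edge[OF assms, where d = d and Q = "\<lambda>_. True"] by simp
  moreover have "Ncount n k (d - ev S)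
      = card {H \<in> kgraphs_deg n k (d - ev S). S \<in> H} + card {H \<in> kgraphs_deg n k (d - ev S). S \<notin> H}"
    using card_filter_split[OF finite_kgraphs_deg, where Q = "\<lambda>_. True"] unfolding Ncount_def by simp
  ultimately show ?thesis
    using card_with_edge_eq_Pe[of n k "d - ev S" S] by (simp add: algebra_simps)
qed

lemma Y_recursion:
  assumes S: "K \<union> {a} \<in> ksub (verts n) k" and "a \<notin> K" "a \<noteq> b"
    and P_lt_1: "Pe n k (K \<union> {a}) (d - ev (K \<union> {a})) < 1"
  shows "Y n k a K b d = Pe n k (K \<union> {a}) d / (1 - Pe n k (K \<union> {a}) (d - ev (K \<union> {a})))
        * (Pe n k (K \<union> {b}) (d - ev (K \<union> {a})) - Y n k a K b (d - ev (K \<union> {a})))"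
proof -
  define d' where "d' = d - ev (K \<union> {a})"
  define N where "N = real (Ncount n k d)"
  define N' where "N' = real (Ncount n k d')"
  have "K \<union> {a} \<noteq> K \<union> {b}"
    using assms by auto
  have "Y n k a K b d * N = real (card {G \<in> kgraphs_deg n k d. K \<union> {a} \<in> G \<and> K \<union> {b} \<in> G})"
    using card_with_edges_eq_Y[OF \<open>a \<noteq> b\<close>] unfolding N_def by simp
  also have "\<dots> = real (card {H \<in> kgraphs_deg n k d'. K \<union> {b} \<in> H \<and> K \<union> {a} \<notin> H})"
    using card_with_edge_eq_card_without_edge[OF S, where d = d and Q = "\<lambda>G. K \<union> {b} \<in> G"]
      \<open>K \<union> {a} \<noteq> K \<union> {b}\<close> unfolding d'_def by (simp add: conj_commute)
  also have "\<dots> = real (card {H \<in> kgraphs_deg n k d'. K \<union> {b} \<in> H})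
      - real (card {H \<in> kgraphs_deg n k d'. K \<union> {a} \<in> H \<and> K \<union> {b} \<in> H})"
    using card_filter_split[OF finite_kgraphs_deg[of n k d'],
        where Q = "\<lambda>H. K \<union> {b} \<in> H" and P = "\<lambda>H. K \<union> {a} \<in> H"]
    by (simp add: conj_commute)
  also have "\<dots> = (Pe n k (K \<union> {b}) d' - Y n k a K b d') * N'"
    using card_with_edges_eq_Y[OF \<open>a \<noteq> b\<close>] card_with_edge_eq_Pe
    unfolding N'_def by (simp add: algebra_simps)
  finally have "Y n k a K b d * N = (Pe n k (K \<union> {b}) d' - Y n k a K b d') * N'" .
  moreover have "Pe n k (K \<union> {a}) d * N = N' * (1 - Pe n k (K \<union> {a}) d')"
    using card_with_edge_eq_Ncount_diff[OF S, of d] card_with_edge_eq_Pe[of n k d "K \<union> {a}"]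
    unfolding N_def N'_def d'_def by simp
  ultimately have "N * (Y n k a K b d * (1 - Pe n k (K \<union> {a}) d'))
      = N * (Pe n k (K \<union> {a}) d * (Pe n k (K \<union> {b}) d' - Y n k a K b d'))"
    by (metis mult.assoc mult.commute)
  \<comment> \<open>if \<open>d\<close> is not graphical, both sides vanish because of division by zero\<close>
  moreover have "N = 0 \<Longrightarrow> Y n k a K b d = 0 \<and> Pe n k (K \<union> {a}) d = 0"
    unfolding N_def Y_def Pe_def by simp
  ultimately have "Y n k a K b d * (1 - Pe n k (K \<union> {a}) d')
      = Pe n k (K \<union> {a}) d * (Pe n k (K \<union> {b}) d' - Y n k a K b d')"
    by (cases "N = 0") simp_all
  then show ?thesis
    using P_lt_1 unfolding d'_def[symmetric] by (simp add: divide_simps)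
qed

section \<open>Telescoping along the consistent ordering\<close>

lemma length_fillB: "length (fillB B xs ys) = length xs"
  by (induction xs arbitrary: ys) auto

lemma set_fillB:
  "length ys = length (filter (\<lambda>x. x \<notin> B) xs) \<Longrightarrow> set (fillB B xs ys) = (set xs \<inter> B) \<union> set ys"
proof (induction xs arbitrary: ys)
  case (Cons x xs)
  then show ?case
    by (cases "x \<in> B"; cases ys) auto
qed simp

lemma distinct_fillB:
  "length ys = length (filter (\<lambda>x. x \<notin> B) xs) \<Longrightarrow> distinct xs \<Longrightarrow> distinct ys
   \<Longrightarrow> set ys \<inter> set xs = {} \<Longrightarrow> distinct (fillB B xs ys)"
proof (induction xs arbitrary: ys)
  case (Cons x xs)
  then show ?case
    using set_fillB[of "tl ys" B xs] set_fillB[of ys B xs] by (cases "x \<in> B"; cases ys) auto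
qed simp

lemma nth_fillB:
  "length ys = length (filter (\<lambda>x. x \<notin> B) xs) \<Longrightarrow> i < length xs \<Longrightarrow>
   fillB B xs ys ! i = xs ! i \<or> fillB B xs ys ! i \<in> set ys"
proof (induction xs arbitrary: ys i)
  case (Cons x xs)
  show ?case
  proof (cases "x \<in> B")
    case True
    then show ?thesis using Cons by (cases i) auto
  next
    case False
    then show ?thesis using Cons by (cases ys; cases i) auto
  qed
qed simp

lemma cons_ord_properties:
  assumes "finite A" "finite B" "card A = card B"
  shows "distinct (cons_ord_A A)" "set (cons_ord_A A) = A" "length (cons_ord_A A) = card A"
    and "distinct (cons_ord_B A B)" "set (cons_ord_B A B) = B" "length (cons_ord_B A B) = card A"
    and "\<forall>i < card A. cons_ord_B A B ! i = cons_ord_A A ! i \<or> cons_ord_B A B ! i \<notin> A"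
proof -
  define as where "as = sorted_list_of_set A"
  define ys where "ys = sorted_list_of_set (B - A)"
  have as: "distinct as" "set as = A" "length as = card A"
    unfolding as_def using assms(1) by auto
  have ys: "distinct ys" "set ys = B - A"
    unfolding ys_def using assms(2) by auto
  have "length (filter (\<lambda>x. x \<notin> B) as) = card (A - B)"
    using as by (metis distinct_card distinct_filter set_filter set_diff_eq)
  also have "\<dots> = card (B - A)"
    using assms by (metis Int_commute card_Diff_subset_Int finite_Int)
  finally have len: "length ys = length (filter (\<lambda>x. x \<notin> B) as)"
    unfolding ys_def by simp
  have B: "cons_ord_B A B = fillB B as ys"
    unfolding cons_ord_B_def as_def ys_def ..
  show "distinct (cons_ord_A A)" "set (cons_ord_A A) = A" "length (cons_ord_A A) = card A"
    using as unfolding cons_ord_A_def as_def by auto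
  show "distinct (cons_ord_B A B)"
    unfolding B using distinct_fillB[OF len as(1) ys(1)] ys(2) as(2) by auto
  show "set (cons_ord_B A B) = B"
    unfolding B using set_fillB[OF len] as(2) ys(2) by auto
  show "length (cons_ord_B A B) = card A"
    unfolding B using length_fillB as(3) by simp
  show "\<forall>i < card A. cons_ord_B A B ! i = cons_ord_A A ! i \<or> cons_ord_B A B ! i \<notin> A"
    unfolding B cons_ord_A_def as_def[symmetric] using nth_fillB[OF len] as(3) ys(2) by fastforce
qed

lemma exchange_step_fresh:
  assumes "distinct as" "distinct bs" "length bs = length as"
    and consistent: "\<forall>i < length as. bs ! i = as ! i \<or> bs ! i \<notin> set as"
    and j: "j < length as"
  shows "as ! j \<notin> set (take j bs) \<union> set (drop (Suc j) as)"
    and "bs ! j \<notin> set (take j bs) \<union> set (drop (Suc j) as)"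
proof -
  have a_drop: "as ! j \<notin> set (drop (Suc j) as)"
    using assms(1) j by (metis Cons_nth_drop_Suc distinct.simps(2) distinct_drop)
  have "as ! j \<notin> set (take j bs)"
  proof
    assume "as ! j \<in> set (take j bs)"
    then obtain i where i: "i < j" "bs ! i = as ! j"
      using j assms(3) by (auto simp: in_set_conv_nth)
    then have "bs ! i = as ! i"
      using consistent j by (metis nth_mem order.strict_trans)
    then show False
      using i j assms(1) by (simp add: nth_eq_iff_index_eq)
  qed
  then show "as ! j \<notin> set (take j bs) \<union> set (drop (Suc j) as)"
    using a_drop by simp
  have "bs ! j \<in> set (drop j bs)"
    using assms(3) j by (metis Cons_nth_drop_Suc list.set_intros(1))
  then have "bs ! j \<notin> set (take j bs)"
    using set_take_disj_set_drop_if_distinct[OF assms(2) order.refl, of j] by blast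
  moreover have "bs ! j \<notin> set (drop (Suc j) as)"
    using consistent j a_drop by (metis in_set_dropD)
  ultimately show "bs ! j \<notin> set (take j bs) \<union> set (drop (Suc j) as)"
    by simp
qed

lemma diff_ev_Un: "X \<inter> Z = {} \<Longrightarrow> d - ev X - ev Z = d - ev (X \<union> Z)"
  by (auto simp: fun_eq_iff ev_def)

lemma RBA_telescope:
  assumes "finite A" "finite B" "card A = k - 1" "card B = k - 1"
    and graphical: "\<forall>j \<le> k - 1.
      kgraphical n k (d - ev (set (take j (cons_ord_B A B)) \<union> set (drop j (cons_ord_A A))))"
  shows "RBA n k B A d = real (Ncount n k (d - ev B)) / real (Ncount n k (d - ev A))"
proof -
  define as where "as = cons_ord_A A"
  define bs where "bs = cons_ord_B A B"
  define f where "f j = real (Ncount n k (d - ev (set (take j bs) \<union> set (drop j as))))" for j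
  have ord: "distinct as" "set as = A" "length as = k - 1" "distinct bs" "set bs = B" "length bs = k - 1"
    "\<forall>i < length as. bs ! i = as ! i \<or> bs ! i \<notin> set as"
    using cons_ord_properties[OF assms(1,2)] assms(3,4) unfolding as_def bs_def by auto
  have step: "Rab n k (bs ! j) (as ! j) (d - ev (set (take j bs) \<union> set (drop (Suc j) as)))
      = f (Suc j) / f j" if j: "j < k - 1" for j
  proof -
    define Z where "Z = set (take j bs) \<union> set (drop (Suc j) as)"
    have "set (take (Suc j) bs) \<union> set (drop (Suc j) as) = insert (bs ! j) Z"
      using j ord(6) unfolding Z_def by (simp add: take_Suc_conv_app_nth)
    moreover have "set (take j bs) \<union> set (drop j as) = insert (as ! j) Z"
      using j ord(3) unfolding Z_def by (metis Cons_nth_drop_Suc Un_insert_right list.simps(15))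
    moreover have "as ! j \<notin> Z" "bs ! j \<notin> Z"
      using exchange_step_fresh[of as bs j] ord j unfolding Z_def by simp_all
    ultimately show ?thesis
      unfolding Rab_def f_def Z_def[symmetric] by (simp add: diff_ev_Un)
  qed
  have "RBA n k B A d = (\<Prod>j < k - 1. f (Suc j) / f j)"
    unfolding RBA_def Let_def as_def[symmetric] bs_def[symmetric] using step by simp
  also have "\<dots> = f (k - 1) / f 0"
    using graphical by (intro prod_lessThan_telescope) (auto simp: f_def kgraphical_def as_def bs_def)
  finally show ?thesis
    using ord unfolding f_def by simp
qed

section \<open>Double counting at a vertex\<close>

lemma card_link:
  assumes "G \<subseteq> ksub (verts n) k" "1 \<le> k"
  shows "card {B \<in> ksub (verts n - {v}) (k - 1). B \<union> {v} \<in> G} = card {e \<in> G. v \<in> e}"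
proof -
  have "{e \<in> G. v \<in> e} = (\<lambda>B. B \<union> {v}) ` {B \<in> ksub (verts n - {v}) (k - 1). B \<union> {v} \<in> G}"
  proof (intro equalityI subsetI)
    fix e assume e: "e \<in> {e \<in> G. v \<in> e}"
    then have "e \<in> ksub (verts n) k"
      using assms(1) by blast
    then have "e - {v} \<in> ksub (verts n - {v}) (k - 1)"
      using e by (auto simp: mem_ksub_iff)
    then show "e \<in> (\<lambda>B. B \<union> {v}) ` {B \<in> ksub (verts n - {v}) (k - 1). B \<union> {v} \<in> G}"
      using e by (intro image_eqI[of _ _ "e - {v}"]) (auto simp: insert_absorb)
  qed auto
  moreover have "inj_on (\<lambda>B. B \<union> {v}) {B \<in> ksub (verts n - {v}) (k - 1). B \<union> {v} \<in> G}"
    by (rule inj_on_subset[OF inj_on_Un_disjoint]) (auto simp: mem_ksub_iff)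
  ultimately show ?thesis
    by (simp add: card_image)
qed

lemma sum_card_with_edge_through_vertex:
  assumes "1 \<le> k" "v \<in> verts n"
  shows "(\<Sum>B \<in> ksub (verts n - {v}) (k - 1). real (card {G \<in> kgraphs_deg n k d. B \<union> {v} \<in> G}))
       = real (Ncount n k d) * real_of_int (d v)"
proof -
  have "finite (ksub (verts n - {v}) (k - 1))"
    by (simp add: finite_ksub)
  then have "(\<Sum>B \<in> ksub (verts n - {v}) (k - 1). real (card {G \<in> kgraphs_deg n k d. B \<union> {v} \<in> G}))
      = (\<Sum>G \<in> kgraphs_deg n k d. real (card {B \<in> ksub (verts n - {v}) (k - 1). B \<union> {v} \<in> G}))"
    by (simp only: of_nat_sum[symmetric] sum_card_filter_swap[OF _ finite_kgraphs_deg])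
  also have "\<dots> = (\<Sum>G \<in> kgraphs_deg n k d. real_of_int (d v))"
  proof (intro sum.cong refl)
    fix G assume G: "G \<in> kgraphs_deg n k d"
    have "real (card {B \<in> ksub (verts n - {v}) (k - 1). B \<union> {v} \<in> G})
        = real_of_int (int (card {e \<in> G. v \<in> e}))"
      using card_link[OF kgraphs_deg_subset[OF G] assms(1)] by simp
    also have "\<dots> = real_of_int (d v)"
      using card_incident_edges[OF G assms(2)] by simp
    finally show "real (card {B \<in> ksub (verts n - {v}) (k - 1). B \<union> {v} \<in> G}) = real_of_int (d v)" .
  qed
  finally show ?thesis
    unfolding Ncount_def by simp
qed

lemma Pe_eq_inverse_sum_RBA:
  assumes "1 \<le> k" and A: "A \<in> ksub (verts n) (k - 1)" and v: "v \<in> verts n - A"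
    and pos: "Pe n k (A \<union> {v}) d > 0"
    and graphical: "\<forall>B \<in> ksub (verts n - {v}) (k - 1). \<forall>j \<le> k - 1.
      kgraphical n k (d - ev {v} - ev (set (take j (cons_ord_B A B)) \<union> set (drop j (cons_ord_A A))))"
  shows "Pe n k (A \<union> {v}) d = real_of_int (d v) * inverse
        (\<Sum>B \<in> ksub (verts n - {v}) (k - 1).
           RBA n k B A (d - ev {v}) *
           ((1 - Pe n k (B \<union> {v}) (d - ev (B \<union> {v})))
            / (1 - Pe n k (A \<union> {v}) (d - ev (A \<union> {v})))))"
proof -
  define KS where "KS = ksub (verts n - {v}) (k - 1)"
  define c where "c B = real (card {G \<in> kgraphs_deg n k d. B \<union> {v} \<in> G})" for B
  define N where "N = real (Ncount n k d)"
  have KS_iff: "B \<in> KS \<longleftrightarrow> B \<in> ksub (verts n) (k - 1) \<and> v \<notin> B" for B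
    unfolding KS_def by (auto simp: mem_ksub_iff)
  have "A \<in> KS"
    using A v KS_iff by simp
  have Pe_A: "Pe n k (A \<union> {v}) d = c A / N"
    unfolding Pe_def c_def N_def ..
  then have "N > 0" "c A > 0"
    using pos by (auto simp: N_def zero_less_divide_iff)
  have c_eq: "c B = real (Ncount n k (d - ev (B \<union> {v}))) * (1 - Pe n k (B \<union> {v}) (d - ev (B \<union> {v})))"
    if "B \<in> KS" for B
    unfolding c_def using that v KS_iff
    by (intro card_with_edge_eq_Ncount_diff Un_singleton_mem_ksub[OF _ _ \<open>1 \<le> k\<close> finite_verts]) auto
  have summand: "RBA n k B A (d - ev {v}) * ((1 - Pe n k (B \<union> {v}) (d - ev (B \<union> {v})))
      / (1 - Pe n k (A \<union> {v}) (d - ev (A \<union> {v})))) = c B / c A" if B: "B \<in> KS" for B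
  proof -
    have fin: "finite A" "finite B" "card A = k - 1" "card B = k - 1" "v \<notin> B"
      using A B KS_iff finite_subset[OF _ finite_verts] by (auto simp: mem_ksub_iff)
    have "RBA n k B A (d - ev {v})
        = real (Ncount n k (d - ev {v} - ev B)) / real (Ncount n k (d - ev {v} - ev A))"
      using RBA_telescope[OF fin(1-4)] B graphical unfolding KS_def by blast
    also have "\<dots> = real (Ncount n k (d - ev (B \<union> {v}))) / real (Ncount n k (d - ev (A \<union> {v})))"
      using v fin(5) by (simp add: diff_ev_Un)
    finally show ?thesis
      using c_eq[OF B] c_eq[OF \<open>A \<in> KS\<close>] \<open>c A > 0\<close> by auto
  qed
  have sum_c: "(\<Sum>B \<in> KS. c B) = N * real_of_int (d v)"
    using sum_card_with_edge_through_vertex[OF \<open>1 \<le> k\<close>] v unfolding KS_def c_def N_def by simp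
  have "c A \<le> (\<Sum>B \<in> KS. c B)"
    using \<open>A \<in> KS\<close> unfolding KS_def
    by (intro member_le_sum finite_ksub) (auto simp: c_def)
  then have "real_of_int (d v) > 0"
    using sum_c \<open>c A > 0\<close> \<open>N > 0\<close> by (metis zero_less_mult_pos order.strict_trans2)
  have "(\<Sum>B \<in> KS. RBA n k B A (d - ev {v}) * ((1 - Pe n k (B \<union> {v}) (d - ev (B \<union> {v})))
      / (1 - Pe n k (A \<union> {v}) (d - ev (A \<union> {v}))))) = N * real_of_int (d v) / c A"
    using summand by (simp add: sum_c flip: sum_divide_distrib)
  then show ?thesis
    unfolding KS_def Pe_A using \<open>real_of_int (d v) > 0\<close> \<open>N > 0\<close> by simp
qed

section \<open>Switchings\<close>

definition switch :: "'a \<Rightarrow> 'a \<Rightarrow> 'a set \<Rightarrow> 'a set" where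
  "switch a b e = insert b (e - {a})"

definition switchings :: "nat \<Rightarrow> nat \<Rightarrow> (nat \<Rightarrow> int) \<Rightarrow> nat \<Rightarrow> nat \<Rightarrow> (nat set set \<times> nat set) set" where
  "switchings n k d a b =
     (SIGMA G : kgraphs_deg n k (d - ev {b}). {e \<in> G. a \<in> e \<and> b \<notin> e \<and> switch a b e \<notin> G})"

definition apply_switch :: "'a \<Rightarrow> 'a \<Rightarrow> 'a set set \<times> 'a set \<Rightarrow> 'a set set \<times> 'a set" where
  "apply_switch a b = (\<lambda>(G, e). (insert (switch a b e) (G - {e}), switch a b e))"

lemma switch_switch: "a \<in> e \<Longrightarrow> b \<notin> e \<Longrightarrow> switch b a (switch a b e) = e"
  unfolding switch_def by auto

lemma switch_mem_ksub:
  assumes "e \<in> ksub S k" "a \<in> e" "b \<in> S - e" "finite S"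
  shows "switch a b e \<in> ksub S k"
proof -
  have "finite e"
    using assms(1,4) finite_subset by (auto simp: mem_ksub_iff)
  then have "card e > 0"
    using assms(2) by (auto simp: card_gt_0_iff)
  with \<open>finite e\<close> show ?thesis
    using assms by (auto simp: mem_ksub_iff switch_def card_Diff_singleton)
qed

lemma apply_switch_mem:
  assumes "b \<in> verts n" "a \<noteq> b" and x: "x \<in> switchings n k d a b"
  shows "apply_switch a b x \<in> switchings n k d b a"
proof -
  obtain G e where x_eq: "x = (G, e)" and G: "G \<in> kgraphs_deg n k (d - ev {b})"
    and e: "e \<in> G" "a \<in> e" "b \<notin> e" "switch a b e \<notin> G"
    using x unfolding switchings_def by auto
  have e_ksub: "e \<in> ksub (verts n) k"
    using kgraphs_deg_subset[OF G] e(1) ..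
  have e'_ksub: "switch a b e \<in> ksub (verts n) k"
    using switch_mem_ksub[OF e_ksub e(2)] e(3) assms(1) by simp
  have "G - {e} \<in> kgraphs_deg n k (d - ev {b} - ev e)"
    using insert_mem_kgraphs_deg_iff[OF e_ksub, of "G - {e}"] G e(1) by (simp add: insert_absorb)
  moreover have "d - ev {a} - ev (switch a b e) = d - ev {b} - ev e"
    using e(2,3) assms(2) by (auto simp: fun_eq_iff ev_def switch_def)
  ultimately have "insert (switch a b e) (G - {e}) \<in> kgraphs_deg n k (d - ev {a})"
    using insert_mem_kgraphs_deg_iff[OF e'_ksub, of "G - {e}"] e(4) by simp
  moreover have "switch b a (switch a b e) \<notin> insert (switch a b e) (G - {e})"
    using e(2,3) by (auto simp: switch_switch switch_def)
  ultimately show ?thesis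
    unfolding x_eq switchings_def apply_switch_def using assms(2) by (auto simp: switch_def)
qed

lemma apply_switch_involution:
  "x \<in> switchings n k d a b \<Longrightarrow> apply_switch b a (apply_switch a b x) = x"
  unfolding switchings_def apply_switch_def by (auto simp: switch_switch insert_absorb)

lemma card_switchings_sym:
  assumes "a \<in> verts n" "b \<in> verts n" "a \<noteq> b"
  shows "card (switchings n k d a b) = card (switchings n k d b a)"
  by (rule bij_betw_same_card[of "apply_switch a b", OF bij_betw_byWitness[where f' = "apply_switch b a"]])
    (use apply_switch_involution apply_switch_mem[OF assms(2,3)]
      apply_switch_mem[OF assms(1) not_sym[OF assms(3)]] in blast)+

lemma card_edges_through_pair:
  assumes "G \<subseteq> ksub (verts n) k" "a \<noteq> b"
  shows "card {e \<in> G. a \<in> e \<and> b \<in> e} = card {K \<in> ksub (verts n - {a, b}) (k - 2). K \<union> {a, b} \<in> G}"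
proof -
  have "{e \<in> G. a \<in> e \<and> b \<in> e} = (\<lambda>K. K \<union> {a, b}) ` {K \<in> ksub (verts n - {a, b}) (k - 2). K \<union> {a, b} \<in> G}"
  proof (intro equalityI subsetI)
    fix e assume e: "e \<in> {e \<in> G. a \<in> e \<and> b \<in> e}"
    then have "e \<in> ksub (verts n) k"
      using assms(1) by blast
    then have "e - {a, b} \<in> ksub (verts n - {a, b}) (k - 2)"
      using e assms(2) finite_subset[OF _ finite_verts] by (auto simp: mem_ksub_iff card_Diff_subset)
    moreover have "e = e - {a, b} \<union> {a, b}"
      using e by auto
    ultimately show "e \<in> (\<lambda>K. K \<union> {a, b}) ` {K \<in> ksub (verts n - {a, b}) (k - 2). K \<union> {a, b} \<in> G}"
      using e by (metis (mono_tags, lifting) image_eqI mem_Collect_eq)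
  qed auto
  moreover have "inj_on (\<lambda>K. K \<union> {a, b}) {K \<in> ksub (verts n - {a, b}) (k - 2). K \<union> {a, b} \<in> G}"
    by (rule inj_on_subset[OF inj_on_Un_disjoint]) (auto simp: mem_ksub_iff)
  ultimately show ?thesis
    by (simp add: card_image)
qed

lemma card_edges_switchable_within:
  assumes "G \<subseteq> ksub (verts n) k" "a \<noteq> b"
  shows "card {e \<in> G. a \<in> e \<and> b \<notin> e \<and> switch a b e \<in> G}
       = card {K \<in> ksub (verts n - {a, b}) (k - 1). K \<union> {a} \<in> G \<and> K \<union> {b} \<in> G}"
proof -
  have "{e \<in> G. a \<in> e \<and> b \<notin> e \<and> switch a b e \<in> G}
      = (\<lambda>K. K \<union> {a}) ` {K \<in> ksub (verts n - {a, b}) (k - 1). K \<union> {a} \<in> G \<and> K \<union> {b} \<in> G}"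
  proof (intro equalityI subsetI)
    fix e assume e: "e \<in> {e \<in> G. a \<in> e \<and> b \<notin> e \<and> switch a b e \<in> G}"
    then have "e \<in> ksub (verts n) k"
      using assms(1) by blast
    then have "e - {a} \<in> ksub (verts n - {a, b}) (k - 1)"
      using e finite_subset[OF _ finite_verts] by (auto simp: mem_ksub_iff)
    moreover have "e - {a} \<union> {b} = switch a b e"
      unfolding switch_def by auto
    ultimately show "e \<in> (\<lambda>K. K \<union> {a}) ` {K \<in> ksub (verts n - {a, b}) (k - 1). K \<union> {a} \<in> G \<and> K \<union> {b} \<in> G}"
      using e by (intro image_eqI[of _ _ "e - {a}"]) (auto simp: insert_absorb)
  next
    fix e assume "e \<in> (\<lambda>K. K \<union> {a}) ` {K \<in> ksub (verts n - {a, b}) (k - 1). K \<union> {a} \<in> G \<and> K \<union> {b} \<in> G}"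
    then obtain K where "e = K \<union> {a}" "a \<notin> K" "b \<notin> K" "K \<union> {a} \<in> G" "K \<union> {b} \<in> G"
      by (auto simp: mem_ksub_iff)
    then show "e \<in> {e \<in> G. a \<in> e \<and> b \<notin> e \<and> switch a b e \<in> G}"
      using assms(2) by (auto simp: switch_def insert_commute)
  qed
  moreover have "inj_on (\<lambda>K. K \<union> {a}) {K \<in> ksub (verts n - {a, b}) (k - 1). K \<union> {a} \<in> G \<and> K \<union> {b} \<in> G}"
    by (rule inj_on_subset[OF inj_on_Un_disjoint]) (auto simp: mem_ksub_iff)
  ultimately show ?thesis
    by (simp add: card_image)
qed

lemma card_switchable_edges:
  assumes G: "G \<in> kgraphs_deg n k (d - ev {b})" and "a \<in> verts n" "a \<noteq> b"
  shows "int (card {e \<in> G. a \<in> e \<and> b \<notin> e \<and> switch a b e \<notin> G})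
       = d a - int (card {K \<in> ksub (verts n - {a, b}) (k - 2). K \<union> {a, b} \<in> G})
             - int (card {K \<in> ksub (verts n - {a, b}) (k - 1). K \<union> {a} \<in> G \<and> K \<union> {b} \<in> G})"
proof -
  have "card {e \<in> G. a \<in> e} = card {e \<in> G. a \<in> e \<and> b \<in> e} + card {e \<in> G. a \<in> e \<and> b \<notin> e}"
    using card_filter_split[OF finite_kgraph[OF G]] .
  moreover have "card {e \<in> G. a \<in> e \<and> b \<notin> e}
      = card {e \<in> G. a \<in> e \<and> b \<notin> e \<and> switch a b e \<in> G}
      + card {e \<in> G. a \<in> e \<and> b \<notin> e \<and> switch a b e \<notin> G}"
    using card_filter_split[OF finite_kgraph[OF G],
        where Q = "\<lambda>e. a \<in> e \<and> b \<notin> e" and P = "\<lambda>e. switch a b e \<in> G"]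
    by (simp add: conj_assoc)
  moreover have "int (card {e \<in> G. a \<in> e}) = d a"
    using card_incident_edges[OF G \<open>a \<in> verts n\<close>] \<open>a \<noteq> b\<close> by (simp add: ev_def)
  ultimately show ?thesis
    using card_edges_through_pair[OF kgraphs_deg_subset[OF G] \<open>a \<noteq> b\<close>]
      card_edges_switchable_within[OF kgraphs_deg_subset[OF G] \<open>a \<noteq> b\<close>]
    by simp
qed

lemma card_switchings:
  assumes "a \<in> verts n" "a \<noteq> b"
  shows "real (card (switchings n k d a b)) = real (Ncount n k (d - ev {b})) *
    (real_of_int (d a) - ((\<Sum>K \<in> ksub (verts n - {a, b}) (k - 2). Pe n k (K \<union> {a, b}) (d - ev {b}))
      + (\<Sum>K \<in> ksub (verts n - {a, b}) (k - 1). Y n k a K b (d - ev {b}))))"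
proof -
  define D where "D = kgraphs_deg n k (d - ev {b})"
  define KS2 where "KS2 = ksub (verts n - {a, b}) (k - 2)"
  define KS1 where "KS1 = ksub (verts n - {a, b}) (k - 1)"
  have fin: "finite D" "finite KS2" "finite KS1"
    unfolding D_def KS2_def KS1_def by (simp_all add: finite_kgraphs_deg finite_ksub)
  have "real (card (switchings n k d a b))
      = (\<Sum>G \<in> D. real (card {e \<in> G. a \<in> e \<and> b \<notin> e \<and> switch a b e \<notin> G}))"
    unfolding switchings_def D_def[symmetric] using fin(1)
    by (simp add: D_def finite_kgraph)
  also have "\<dots> = (\<Sum>G \<in> D. real_of_int (d a)
      - real (card {K \<in> KS2. K \<union> {a, b} \<in> G}) - real (card {K \<in> KS1. K \<union> {a} \<in> G \<and> K \<union> {b} \<in> G}))"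
    using arg_cong[where f = real_of_int, OF card_switchable_edges[OF _ assms]]
    unfolding D_def KS1_def KS2_def by (intro sum.cong refl) simp
  also have "\<dots> = real (card D) * real_of_int (d a)
      - real (\<Sum>K \<in> KS2. card {G \<in> D. K \<union> {a, b} \<in> G})
      - real (\<Sum>K \<in> KS1. card {G \<in> D. K \<union> {a} \<in> G \<and> K \<union> {b} \<in> G})"
    by (simp add: sum_subtractf sum_card_filter_swap[OF fin(1,2)] sum_card_filter_swap[OF fin(1,3)]
        flip: of_nat_sum)
  also have "\<dots> = real (card D) * real_of_int (d a)
      - (\<Sum>K \<in> KS2. Pe n k (K \<union> {a, b}) (d - ev {b}) * real (card D))
      - (\<Sum>K \<in> KS1. Y n k a K b (d - ev {b}) * real (card D))"
    unfolding D_def using card_with_edge_eq_Pe card_with_edges_eq_Y[OF \<open>a \<noteq> b\<close>]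
    by (simp add: Ncount_def)
  finally show ?thesis
    unfolding D_def KS1_def KS2_def Ncount_def
    by (simp add: sum_distrib_left algebra_simps)
qed

lemma kgraphical_diff_ev_pos:
  assumes "a \<in> verts n" "kgraphical n k (d - ev {a})"
  shows "d a > 0"
proof -
  obtain G where "G \<in> kgraphs_deg n k (d - ev {a})"
    using assms(2) unfolding kgraphical_def Ncount_def by (auto simp: card_gt_0_iff)
  from card_incident_edges[OF this assms(1)] show ?thesis by (simp add: ev_def)
qed

lemma Rab_switching_formula:
  assumes a: "a \<in> verts n" and b: "b \<in> verts n"
    and graphical: "kgraphical n k (d - ev {a})" "kgraphical n k (d - ev {b})"
    and B_lt_1: "Bq n k d a b b a (d - ev {a}) < 1"
  shows "Rab n k a b d = (real_of_int (d a) / real_of_int (d b)) *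
        ((1 - Bq n k d a b a b (d - ev {b})) / (1 - Bq n k d a b b a (d - ev {a})))"
proof -
  have "real_of_int (d a) > 0" "real_of_int (d b) > 0"
    using kgraphical_diff_ev_pos a b graphical by simp_all
  have "real (Ncount n k (d - ev {b})) > 0"
    using graphical(2) unfolding kgraphical_def by simp
  show ?thesis
  proof (cases "a = b")
    case True
    then show ?thesis
      unfolding Rab_def using \<open>real_of_int (d a) > 0\<close> \<open>real (Ncount n k (d - ev {b})) > 0\<close> B_lt_1
      by simp
  next
    case False
    have "real (card (switchings n k d a b))
        = real (Ncount n k (d - ev {b})) * (real_of_int (d a) * (1 - Bq n k d a b a b (d - ev {b})))"
      unfolding card_switchings[OF a False] Bq_def using \<open>real_of_int (d a) > 0\<close>
      by (simp add: field_simps)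
    moreover have "real (card (switchings n k d b a))
        = real (Ncount n k (d - ev {a})) * (real_of_int (d b) * (1 - Bq n k d a b b a (d - ev {a})))"
      unfolding card_switchings[OF b not_sym[OF False]] Bq_def using \<open>real_of_int (d b) > 0\<close>
      by (simp add: field_simps insert_commute)
    ultimately show ?thesis
      using card_switchings_sym[OF a b False, of k d] B_lt_1 \<open>real_of_int (d b) > 0\<close>
        \<open>real (Ncount n k (d - ev {b})) > 0\<close>
      unfolding Rab_def by (simp add: field_simps)
  qed
qed

theorem lemma3p2:
  fixes n k :: nat and d :: "nat \<Rightarrow> int"
  assumes "2 \<le> k" and "k \<le> n"
  shows
  "(\<forall>a \<in> verts n. \<forall>b \<in> verts n.
      kgraphical n k (d - ev {a}) \<and> kgraphical n k (d - ev {b})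
      \<and> Bq n k d a b b a (d - ev {a}) < 1 \<longrightarrow>
      Rab n k a b d = (real_of_int (d a) / real_of_int (d b)) *
        ((1 - Bq n k d a b a b (d - ev {b})) / (1 - Bq n k d a b b a (d - ev {a}))))
   \<and>
   (\<forall>A \<in> ksub (verts n) (k - 1). \<forall>v \<in> verts n - A.
      Pe n k (A \<union> {v}) d > 0
      \<and> (\<forall>B \<in> ksub (verts n - {v}) (k - 1). \<forall>j \<le> k - 1.
           kgraphical n k (d - ev {v} - ev (set (take j (cons_ord_B A B)) \<union> set (drop j (cons_ord_A A)))))
      \<longrightarrow>
      Pe n k (A \<union> {v}) d = real_of_int (d v) * inverse
        (\<Sum>B \<in> ksub (verts n - {v}) (k - 1).
           RBA n k B A (d - ev {v}) *
           ((1 - Pe n k (B \<union> {v}) (d - ev (B \<union> {v})))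
            / (1 - Pe n k (A \<union> {v}) (d - ev (A \<union> {v}))))))
   \<and>
   (\<forall>K \<in> ksub (verts n) (k - 1). \<forall>a \<in> verts n - K. \<forall>b \<in> verts n - K.
      a \<noteq> b \<and> kgraphical n k d \<and> kgraphical n k (d - ev (K \<union> {a}))
      \<and> Pe n k (K \<union> {a}) (d - ev (K \<union> {a})) < 1 \<longrightarrow>
      Y n k a K b d = Pe n k (K \<union> {a}) d / (1 - Pe n k (K \<union> {a}) (d - ev (K \<union> {a})))
        * (Pe n k (K \<union> {b}) (d - ev (K \<union> {a})) - Y n k a K b (d - ev (K \<union> {a}))))"
proof -
  have "1 \<le> k"
    using assms(1) by simp
  show ?thesis
    using Rab_switching_formula Pe_eq_inverse_sum_RBA[OF \<open>1 \<le> k\<close>]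
      Y_recursion[OF Un_singleton_mem_ksub[OF _ _ \<open>1 \<le> k\<close> finite_verts]]
    by blast
qed

end
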